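(* Let $r\ge2$ and $k\ge3$ be integers and let $\widehat{F}_k$ be any $r$-coloring of $K_k$. Let $G$ be an $(r,\widehat{F}_k)$-extremal graph which is not a complete multipartite graph. For any vertices $u,v,w$ of $G$ such that $uv\notin E(G)$, $uw\notin E(G)$ and $vw\in E(G)$, the graph obtained from $G$ by deleting the edge $vw$ is still $(r,\widehat{F}_k)$-extremal.
   Context: An $r$-coloring of a graph assigns colors from $\{1,\dots,r\}$ to edges (not necessarily properly). A copy of $\widehat{F}_k$ in a colored graph is a set of $k$ pairwise adjacent vertices admitting a bijection to $V(K_k)$ under which two edges have equal colors iff their images have equal colors in $\widehat{F}_k$; a coloring is $\widehat{F}_k$-free if it has no copy. $c_{r,\widehat{F}_k}(G)$ is the number of $\widehat{F}_k$-free $r$-colorings of $E(G)$, $c_{r,\widehat{F}_k}(n)$ its maximum over $n$-vertex graphs, and an $n$-vertex graph $G$ is $(r,\widehat{F}_k)$-extremal if $c_{r,\widehat{F}_k}(G)=c_{r,\widehat{F}_k}(n)$. *)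

theory Defs
  imports Main "HOL-Library.FuncSet" "HOL-Library.Disjoint_Sets"
begin

definition all_edges :: "nat set \<Rightarrow> nat set set" where
  "all_edges V = {e. e \<subseteq> V \<and> card e = 2}"

definition graph_on :: "nat \<Rightarrow> nat set set \<Rightarrow> bool" where
  "graph_on n E \<longleftrightarrow> E \<subseteq> all_edges {0..<n}"

definition pattern_coloring :: "nat \<Rightarrow> nat \<Rightarrow> (nat set \<Rightarrow> nat) \<Rightarrow> bool" where
  "pattern_coloring r k \<phi> \<longleftrightarrow> (\<forall>e\<in>all_edges {0..<k}. \<phi> e \<in> {1..r})"

definition is_copy :: "nat set set \<Rightarrow> (nat set \<Rightarrow> nat) \<Rightarrow> nat \<Rightarrow> (nat set \<Rightarrow> nat) \<Rightarrow> nat set \<Rightarrow> bool" where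
  "is_copy E c k \<phi> S \<longleftrightarrow> card S = k \<and> all_edges S \<subseteq> E \<and>
     (\<exists>f. bij_betw f S {0..<k} \<and>
        (\<forall>e1\<in>all_edges S. \<forall>e2\<in>all_edges S. c e1 = c e2 \<longleftrightarrow> \<phi> (f ` e1) = \<phi> (f ` e2)))"

definition free_colorings :: "nat set set \<Rightarrow> nat \<Rightarrow> nat \<Rightarrow> (nat set \<Rightarrow> nat) \<Rightarrow> (nat set \<Rightarrow> nat) set" where
  "free_colorings E r k \<phi> = {c \<in> E \<rightarrow>\<^sub>E {1..r}. \<not> (\<exists>S. is_copy E c k \<phi> S)}"

definition num_free :: "nat set set \<Rightarrow> nat \<Rightarrow> nat \<Rightarrow> (nat set \<Rightarrow> nat) \<Rightarrow> nat" where
  "num_free E r k \<phi> = card (free_colorings E r k \<phi>)"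

definition max_free :: "nat \<Rightarrow> nat \<Rightarrow> (nat set \<Rightarrow> nat) \<Rightarrow> nat \<Rightarrow> nat" where
  "max_free r k \<phi> n = Max {num_free E r k \<phi> | E. graph_on n E}"

definition extremal :: "nat \<Rightarrow> nat \<Rightarrow> (nat set \<Rightarrow> nat) \<Rightarrow> nat \<Rightarrow> nat set set \<Rightarrow> bool" where
  "extremal r k \<phi> n E \<longleftrightarrow> graph_on n E \<and> num_free E r k \<phi> = max_free r k \<phi> n"

definition complete_multipartite :: "nat \<Rightarrow> nat set set \<Rightarrow> bool" where
  "complete_multipartite n E \<longleftrightarrow> (\<exists>P. partition_on {0..<n} P \<and>
     (\<forall>u\<in>{0..<n}. \<forall>v\<in>{0..<n}. u \<noteq> v \<longrightarrow>
        ({u, v} \<in> E \<longleftrightarrow> \<not> (\<exists>X\<in>P. u \<in> X \<and> v \<in> X))))"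

end

theory Submission
  imports Defs "HOL-Combinatorics.Transposition"
begin

text \<open>Zykov symmetrization. If u, v, w are pairwise non-adjacent, fix a colouring \<open>\<psi>\<close> of the edges
  avoiding them; the free colourings of the graph then factorise as \<open>\<Sum>\<^sub>\<psi> a(\<psi>) b(\<psi>) c(\<psi>)\<close>, where
  a, b, c count the free extensions of \<open>\<psi>\<close> to the stars at u, v, w, and the count for a star does
  not change when its centre is renamed. Replacing a vertex by a non-adjacent twin of another one
  therefore keeps a graph extremal (the Cauchy-Schwarz step \<open>\<Sum>a\<^sup>2 = \<Sum>ab\<close>). After deleting vw, the
  twins of u at v and at w give \<open>\<Sum>a\<^sup>2c = \<Sum>a\<^sup>2b = max\<close>, while \<open>\<Sum>a\<^sup>3\<close> and \<open>\<Sum>ac\<^sup>2\<close> are at most max.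
  Hence \<open>\<Sum>a(a - c)\<^sup>2 \<le> 0\<close>, so a = c wherever a \<noteq> 0, and \<open>\<Sum>abc = \<Sum>a\<^sup>2b = max\<close>.\<close>

lemma finite_all_edges: "finite V \<Longrightarrow> finite (all_edges V)"
  by (rule finite_subset[of _ "Pow V"]) (auto simp: all_edges_def)

lemma graph_on_finite: "graph_on n E \<Longrightarrow> finite E"
  unfolding graph_on_def using finite_all_edges finite_subset by blast

lemma graph_on_Un: "graph_on n (A \<union> B) \<longleftrightarrow> graph_on n A \<and> graph_on n B"
  by (auto simp: graph_on_def)

lemma graph_on_subset: "graph_on n E \<Longrightarrow> A \<subseteq> E \<Longrightarrow> graph_on n A"
  by (auto simp: graph_on_def)

lemma all_edges_image: "inj \<pi> \<Longrightarrow> all_edges (\<pi> ` S) = (`) \<pi> ` all_edges S"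
proof -
  assume inj: "inj \<pi>"
  have card: "card (\<pi> ` e) = card e" for e by (rule card_image[OF inj_on_subset[OF inj]]) simp
  show ?thesis
  proof (intro equalityI subsetI)
    fix e assume e: "e \<in> all_edges (\<pi> ` S)"
    then have "e = \<pi> ` (\<pi> -` e \<inter> S)" by (auto simp: all_edges_def)
    moreover have "\<pi> -` e \<inter> S \<in> all_edges S"
      using e card[of "\<pi> -` e \<inter> S"] calculation by (auto simp: all_edges_def)
    ultimately show "e \<in> (`) \<pi> ` all_edges S" by blast
  qed (auto simp: all_edges_def card)
qed

lemma graph_on_image:
  assumes "graph_on n E" "inj \<pi>" "\<pi> ` {0..<n} \<subseteq> {0..<n}"
  shows "graph_on n ((`) \<pi> ` E)"
proof -
  have "(`) \<pi> ` E \<subseteq> all_edges (\<pi> ` {0..<n})"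
    using assms(1) by (auto simp: graph_on_def all_edges_image[OF assms(2)])
  also have "\<dots> \<subseteq> all_edges {0..<n}" using assms(3) by (auto simp: all_edges_def)
  finally show ?thesis unfolding graph_on_def .
qed

lemma graph_on_transpose_image:
  "graph_on n E \<Longrightarrow> x < n \<Longrightarrow> y < n \<Longrightarrow> graph_on n ((`) (transpose x y) ` E)"
  by (rule graph_on_image) (auto simp: inj_transpose transpose_def)

lemma edge_eq_doubleton:
  assumes "graph_on n E" "e \<in> E" "x \<in> e" "y \<in> e" "x \<noteq> y"
  shows "e = {x, y}"
proof -
  have "card e = 2" using assms(1,2) by (auto simp: graph_on_def all_edges_def)
  then show ?thesis using assms(3-5) by (auto simp: card_2_iff)
qed

lemma num_free_le_max_free: "graph_on n E \<Longrightarrow> num_free E r k \<phi> \<le> max_free r k \<phi> n"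
proof -
  assume g: "graph_on n E"
  have "{num_free E r k \<phi> |E. graph_on n E} = (\<lambda>E. num_free E r k \<phi>) ` Pow (all_edges {0..<n})"
    by (auto simp: graph_on_def)
  then show ?thesis unfolding max_free_def
    using g finite_all_edges[of "{0..<n}"] by (auto simp: graph_on_def intro!: Max_ge)
qed

lemma is_copy_cong:
  assumes "is_copy E c k \<phi> S" "all_edges S \<subseteq> E'" "\<And>e. e \<in> all_edges S \<Longrightarrow> c' e = c e"
  shows "is_copy E' c' k \<phi> S"
  using assms unfolding is_copy_def by auto

lemma is_copy_image:
  assumes copy: "is_copy E c k \<phi> S" and "bij \<pi>"
    and col: "\<And>e. e \<in> all_edges S \<Longrightarrow> c' (\<pi> ` e) = c e"
  shows "is_copy ((`) \<pi> ` E) c' k \<phi> (\<pi> ` S)"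
proof -
  have inj: "inj \<pi>" using \<open>bij \<pi>\<close> by (rule bij_is_inj)
  obtain f where S: "card S = k" "all_edges S \<subseteq> E" and f: "bij_betw f S {0..<k}"
    and f_col: "\<forall>e1\<in>all_edges S. \<forall>e2\<in>all_edges S. c e1 = c e2 \<longleftrightarrow> \<phi> (f ` e1) = \<phi> (f ` e2)"
    using copy unfolding is_copy_def by blast
  have inv: "bij_betw (inv \<pi>) (\<pi> ` S) S"
    using bij_betw_inv_into_subset[OF \<open>bij \<pi>\<close>, of S] by simp
  have f_back: "(f \<circ> inv \<pi>) ` (\<pi> ` e) = f ` e" for e
    by (simp add: image_image inv_f_f[OF inj])
  show ?thesis unfolding is_copy_def all_edges_image[OF inj]
  proof (intro conjI exI[of _ "f \<circ> inv \<pi>"])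
    show "card (\<pi> ` S) = k" using S inj by (simp add: card_image inj_on_subset)
    show "bij_betw (f \<circ> inv \<pi>) (\<pi> ` S) {0..<k}" using bij_betw_trans[OF inv f] .
  qed (use S f_col col f_back in auto)
qed

lemma free_colorings_finite: "finite F \<Longrightarrow> finite (free_colorings F r k \<phi>)"
  unfolding free_colorings_def by (rule finite_subset[OF _ finite_PiE[of F "\<lambda>_. {1..r}"]]) auto

lemma restrict_free_colorings:
  assumes c: "c \<in> free_colorings F r k \<phi>" and "F' \<subseteq> F"
  shows "restrict c F' \<in> free_colorings F' r k \<phi>"
proof -
  have "\<not> is_copy F' (restrict c F') k \<phi> S" for S
  proof
    assume copy: "is_copy F' (restrict c F') k \<phi> S"
    then have "is_copy F c k \<phi> S"
      by (rule is_copy_cong) (use copy \<open>F' \<subseteq> F\<close> in \<open>auto simp: is_copy_def\<close>)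
    then show False using c unfolding free_colorings_def by blast
  qed
  then show ?thesis using c \<open>F' \<subseteq> F\<close> unfolding free_colorings_def by auto
qed

definition relabel :: "(nat \<Rightarrow> nat) \<Rightarrow> nat set set \<Rightarrow> (nat set \<Rightarrow> nat) \<Rightarrow> nat set \<Rightarrow> nat" where
  "relabel \<pi> F c = (\<lambda>e. if e \<in> (`) \<pi> ` F then c (inv \<pi> ` e) else undefined)"

lemma relabel_free_colorings:
  assumes c: "c \<in> free_colorings F r k \<phi>" and "bij \<pi>"
  shows "relabel \<pi> F c \<in> free_colorings ((`) \<pi> ` F) r k \<phi>"
proof -
  let ?c = "relabel \<pi> F c"
  have inv: "bij (inv \<pi>)" using \<open>bij \<pi>\<close> by (rule bij_imp_bij_inv)
  have inv_cancel_edge: "inv \<pi> ` \<pi> ` e = e" for e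
    using bij_is_inj[OF \<open>bij \<pi>\<close>] by (rule image_inv_f_f)
  then have inv_cancel: "(`) (inv \<pi>) ` (`) \<pi> ` A = A" for A :: "nat set set"
    by (simp add: image_image)
  have "\<not> is_copy ((`) \<pi> ` F) ?c k \<phi> S" for S
  proof
    assume copy: "is_copy ((`) \<pi> ` F) ?c k \<phi> S"
    have "all_edges S \<subseteq> (`) \<pi> ` F" using copy by (simp add: is_copy_def)
    then have "is_copy ((`) (inv \<pi>) ` (`) \<pi> ` F) c k \<phi> (inv \<pi> ` S)"
      by (intro is_copy_image[OF copy inv]) (auto simp: relabel_def)
    then have "is_copy F c k \<phi> (inv \<pi> ` S)" by (simp only: inv_cancel)
    then show False using c unfolding free_colorings_def by blast
  qed
  moreover have "?c \<in> (`) \<pi> ` F \<rightarrow>\<^sub>E {1..r}"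
    using c by (auto simp: free_colorings_def relabel_def inv_cancel_edge)
  ultimately show ?thesis unfolding free_colorings_def by blast
qed

definition free_extensions ::
  "nat \<Rightarrow> nat \<Rightarrow> (nat set \<Rightarrow> nat) \<Rightarrow> nat set set \<Rightarrow> nat set set \<Rightarrow> (nat set \<Rightarrow> nat) \<Rightarrow> (nat set \<Rightarrow> nat) set"
where
  "free_extensions r k \<phi> H X \<psi> =
     {\<alpha> \<in> X \<rightarrow>\<^sub>E {1..r}. (\<lambda>e. if e \<in> H then \<psi> e else \<alpha> e) \<in> free_colorings (H \<union> X) r k \<phi>}"

lemma free_extensions_finite: "finite X \<Longrightarrow> finite (free_extensions r k \<phi> H X \<psi>)"
  unfolding free_extensions_def by (rule finite_subset[OF _ finite_PiE[of X "\<lambda>_. {1..r}"]]) auto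

lemma card_free_extensions_image_le:
  assumes "bij \<pi>" and fix_H: "\<And>e. e \<in> H \<Longrightarrow> \<pi> ` e = e" and "finite X"
  shows "card (free_extensions r k \<phi> H X \<psi>) \<le> card (free_extensions r k \<phi> H ((`) \<pi> ` X) \<psi>)"
proof (rule card_inj_on_le)
  have inv_pi: "inv \<pi> ` \<pi> ` e = e" for e
    using bij_is_inj[OF \<open>bij \<pi>\<close>] by (rule image_inv_f_f)
  have pi_inv: "\<pi> ` inv \<pi> ` e = e" for e
    using bij_is_surj[OF \<open>bij \<pi>\<close>] by (rule image_f_inv_f)
  have inv_fix_H: "e \<in> H \<Longrightarrow> inv \<pi> ` e = e" for e
    using inv_pi fix_H by metis
  show "inj_on (relabel \<pi> X) (free_extensions r k \<phi> H X \<psi>)"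
  proof (rule inj_onI)
    fix \<alpha> \<beta> assume "\<alpha> \<in> free_extensions r k \<phi> H X \<psi>" "\<beta> \<in> free_extensions r k \<phi> H X \<psi>"
      and eq: "relabel \<pi> X \<alpha> = relabel \<pi> X \<beta>"
    then have ext_\<alpha>\<beta>: "\<alpha> \<in> extensional X" "\<beta> \<in> extensional X"
      by (auto simp: free_extensions_def PiE_def)
    show "\<alpha> = \<beta>"
    proof (rule extensionalityI[OF ext_\<alpha>\<beta>])
      fix e assume "e \<in> X"
      then show "\<alpha> e = \<beta> e"
        using fun_cong[OF eq, of "\<pi> ` e"] by (auto simp: relabel_def inv_pi)
    qed
  qed
  show "relabel \<pi> X ` free_extensions r k \<phi> H X \<psi> \<subseteq> free_extensions r k \<phi> H ((`) \<pi> ` X) \<psi>"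
  proof clarify
    fix \<alpha> assume \<alpha>: "\<alpha> \<in> free_extensions r k \<phi> H X \<psi>"
    let ?m = "\<lambda>e. if e \<in> H then \<psi> e else \<alpha> e"
    have H_image: "(`) \<pi> ` (H \<union> X) = H \<union> (`) \<pi> ` X"
      using fix_H by (force simp: image_Un)
    have "relabel \<pi> (H \<union> X) ?m \<in> free_colorings (H \<union> (`) \<pi> ` X) r k \<phi>"
      using relabel_free_colorings[OF _ \<open>bij \<pi>\<close>, of ?m "H \<union> X"] \<alpha>
      unfolding H_image by (simp add: free_extensions_def)
    moreover have "relabel \<pi> (H \<union> X) ?m = (\<lambda>e. if e \<in> H then \<psi> e else relabel \<pi> X \<alpha> e)"
    proof
      fix e
      have "inv \<pi> ` e \<notin> H" if "e \<notin> H" using that fix_H pi_inv by metis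
      then show "relabel \<pi> (H \<union> X) ?m e = (if e \<in> H then \<psi> e else relabel \<pi> X \<alpha> e)"
        using H_image by (auto simp: relabel_def inv_fix_H)
    qed
    moreover have "relabel \<pi> X \<alpha> \<in> (`) \<pi> ` X \<rightarrow>\<^sub>E {1..r}"
      using \<alpha> by (auto simp: free_extensions_def relabel_def inv_pi)
    ultimately show "relabel \<pi> X \<alpha> \<in> free_extensions r k \<phi> H ((`) \<pi> ` X) \<psi>"
      by (simp add: free_extensions_def)
  qed
  show "finite (free_extensions r k \<phi> H ((`) \<pi> ` X) \<psi>)"
    using \<open>finite X\<close> by (simp add: free_extensions_finite)
qed

lemma card_free_extensions_image:
  assumes "bij \<pi>" and fix_H: "\<And>e. e \<in> H \<Longrightarrow> \<pi> ` e = e" and "finite X"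
  shows "card (free_extensions r k \<phi> H ((`) \<pi> ` X) \<psi>) = card (free_extensions r k \<phi> H X \<psi>)"
proof (rule antisym)
  have "inv \<pi> ` e = e" if "e \<in> H" for e
    using fix_H[OF that] image_inv_f_f[OF bij_is_inj[OF \<open>bij \<pi>\<close>], of e] by simp
  then have "card (free_extensions r k \<phi> H ((`) \<pi> ` X) \<psi>)
      \<le> card (free_extensions r k \<phi> H ((`) (inv \<pi>) ` (`) \<pi> ` X) \<psi>)"
    using \<open>finite X\<close> by (intro card_free_extensions_image_le bij_imp_bij_inv \<open>bij \<pi>\<close>) auto
  also have "(`) (inv \<pi>) ` (`) \<pi> ` X = X"
    using bij_is_inj[OF \<open>bij \<pi>\<close>] by (simp add: image_image)
  finally show "card (free_extensions r k \<phi> H ((`) \<pi> ` X) \<psi>) \<le> card (free_extensions r k \<phi> H X \<psi>)" .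
qed (rule card_free_extensions_image_le[OF assms])

lemma free_colorings_glue:
  assumes "c \<in> F \<rightarrow>\<^sub>E {1..r}"
    and cliques: "\<And>S. all_edges S \<subseteq> F \<Longrightarrow> \<exists>G\<in>\<G>. all_edges S \<subseteq> G"
    and free: "\<And>G. G \<in> \<G> \<Longrightarrow> restrict c G \<in> free_colorings G r k \<phi>"
  shows "c \<in> free_colorings F r k \<phi>"
proof -
  have "\<not> is_copy F c k \<phi> S" for S
  proof
    assume copy: "is_copy F c k \<phi> S"
    then obtain G where "G \<in> \<G>" "all_edges S \<subseteq> G" using cliques[of S] by (auto simp: is_copy_def)
    then have "is_copy G (restrict c G) k \<phi> S" by (intro is_copy_cong[OF copy]) auto
    then show False using free[OF \<open>G \<in> \<G>\<close>] by (auto simp: free_colorings_def)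
  qed
  then show ?thesis using assms(1) by (simp add: free_colorings_def)
qed

lemma free_extensions_restrict:
  assumes "c \<in> free_colorings F r k \<phi>" "H \<union> X \<subseteq> F"
  shows "restrict c X \<in> free_extensions r k \<phi> H X (restrict c H)"
proof -
  have "(\<lambda>e. if e \<in> H then restrict c H e else restrict c X e) = restrict c (H \<union> X)" by auto
  then show ?thesis using restrict_free_colorings[OF assms] assms
    by (auto simp: free_extensions_def free_colorings_def)
qed

lemma num_free_split:
  assumes fin: "finite H" "finite X1" "finite X2" "finite X3"
    and disj: "H \<inter> X1 = {}" "H \<inter> X2 = {}" "H \<inter> X3 = {}" "X1 \<inter> X2 = {}" "X1 \<inter> X3 = {}" "X2 \<inter> X3 = {}"
    and cliques: "\<And>S. all_edges S \<subseteq> H \<union> X1 \<union> X2 \<union> X3 \<Longrightarrow>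
       all_edges S \<subseteq> H \<union> X1 \<or> all_edges S \<subseteq> H \<union> X2 \<or> all_edges S \<subseteq> H \<union> X3"
  shows "num_free (H \<union> X1 \<union> X2 \<union> X3) r k \<phi> =
    (\<Sum>\<psi>\<in>free_colorings H r k \<phi>. card (free_extensions r k \<phi> H X1 \<psi>) *
       card (free_extensions r k \<phi> H X2 \<psi>) * card (free_extensions r k \<phi> H X3 \<psi>))"
proof -
  let ?F = "H \<union> X1 \<union> X2 \<union> X3" and ?ext = "free_extensions r k \<phi> H"
  let ?T = "SIGMA \<psi>:free_colorings H r k \<phi>. ?ext X1 \<psi> \<times> ?ext X2 \<psi> \<times> ?ext X3 \<psi>"
  define split where
    "split c = (restrict c H, restrict c X1, restrict c X2, restrict c X3)" for c :: "nat set \<Rightarrow> nat"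
  define glue where "glue = (\<lambda>(\<psi>, \<alpha>1, \<alpha>2, \<alpha>3) e.
     if e \<in> H then \<psi> e else if e \<in> X1 then \<alpha>1 e else if e \<in> X2 then \<alpha>2 e else \<alpha>3 (e :: nat set) :: nat)"
  have "bij_betw split (free_colorings ?F r k \<phi>) ?T"
  proof (rule bij_betw_byWitness[where f' = glue])
    show "\<forall>c\<in>free_colorings ?F r k \<phi>. glue (split c) = c"
      by (auto simp: free_colorings_def split_def glue_def fun_eq_iff PiE_def extensional_def)
    show "\<forall>t\<in>?T. split (glue t) = t"
    proof clarify
      fix \<psi> \<alpha>1 \<alpha>2 \<alpha>3 assume "\<psi> \<in> free_colorings H r k \<phi>"
        "\<alpha>1 \<in> ?ext X1 \<psi>" "\<alpha>2 \<in> ?ext X2 \<psi>" "\<alpha>3 \<in> ?ext X3 \<psi>"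
      then have "\<psi> \<in> extensional H" "\<alpha>1 \<in> extensional X1" "\<alpha>2 \<in> extensional X2"
        "\<alpha>3 \<in> extensional X3"
        by (auto simp: free_colorings_def free_extensions_def PiE_def)
      then show "split (glue (\<psi>, \<alpha>1, \<alpha>2, \<alpha>3)) = (\<psi>, \<alpha>1, \<alpha>2, \<alpha>3)"
        using disj unfolding split_def glue_def by (auto simp: fun_eq_iff extensional_def)
    qed
    show "split ` free_colorings ?F r k \<phi> \<subseteq> ?T"
      by (auto simp: split_def intro!: restrict_free_colorings free_extensions_restrict)
    show "glue ` ?T \<subseteq> free_colorings ?F r k \<phi>"
    proof clarify
      fix \<psi> \<alpha>1 \<alpha>2 \<alpha>3 assume "\<psi> \<in> free_colorings H r k \<phi>"
        and \<alpha>: "\<alpha>1 \<in> ?ext X1 \<psi>" "\<alpha>2 \<in> ?ext X2 \<psi>" "\<alpha>3 \<in> ?ext X3 \<psi>"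
      then have PiE: "\<psi> \<in> H \<rightarrow>\<^sub>E {1..r}" "\<alpha>1 \<in> X1 \<rightarrow>\<^sub>E {1..r}" "\<alpha>2 \<in> X2 \<rightarrow>\<^sub>E {1..r}"
        "\<alpha>3 \<in> X3 \<rightarrow>\<^sub>E {1..r}"
        by (auto simp: free_colorings_def free_extensions_def)
      let ?c = "glue (\<psi>, \<alpha>1, \<alpha>2, \<alpha>3)"
      have restr: "restrict ?c (H \<union> X1) = (\<lambda>e. if e \<in> H then \<psi> e else \<alpha>1 e)"
        "restrict ?c (H \<union> X2) = (\<lambda>e. if e \<in> H then \<psi> e else \<alpha>2 e)"
        "restrict ?c (H \<union> X3) = (\<lambda>e. if e \<in> H then \<psi> e else \<alpha>3 e)"
        using PiE disj by (auto simp: glue_def fun_eq_iff PiE_def extensional_def)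
      show "?c \<in> free_colorings ?F r k \<phi>"
      proof (rule free_colorings_glue[where \<G> = "{H \<union> X1, H \<union> X2, H \<union> X3}"])
        show "?c \<in> ?F \<rightarrow>\<^sub>E {1..r}" using PiE by (auto simp: glue_def PiE_iff extensional_def)
        show "\<exists>G\<in>{H \<union> X1, H \<union> X2, H \<union> X3}. all_edges S \<subseteq> G" if "all_edges S \<subseteq> ?F" for S
          using cliques[OF that] by blast
        show "restrict ?c G \<in> free_colorings G r k \<phi>" if "G \<in> {H \<union> X1, H \<union> X2, H \<union> X3}" for G
          using that \<alpha> unfolding free_extensions_def by (auto simp only: restr)
      qed
    qed
  qed
  then have "num_free ?F r k \<phi> = card ?T" unfolding num_free_def by (rule bij_betw_same_card)
  also have "\<dots> = (\<Sum>\<psi>\<in>free_colorings H r k \<phi>. card (?ext X1 \<psi>) * card (?ext X2 \<psi>) * card (?ext X3 \<psi>))"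
    using fin by (subst card_SigmaI)
      (auto simp: card_cartesian_product mult.assoc free_colorings_finite free_extensions_finite)
  finally show ?thesis .
qed

lemma not_both_in_clique:
  assumes "all_edges S \<subseteq> F" "\<forall>e\<in>F. p \<notin> e \<or> q \<notin> e" "p \<noteq> q"
  shows "p \<notin> S \<or> q \<notin> S"
proof -
  have "{p, q} \<notin> all_edges S" using assms(1,2) by blast
  then show ?thesis using \<open>p \<noteq> q\<close> by (auto simp: all_edges_def)
qed

lemma all_edges_disjoint_star:
  assumes "\<forall>e\<in>X. p \<in> e" "p \<notin> S"
  shows "all_edges S \<inter> X = {}"
  using assms by (auto simp: all_edges_def)

lemma num_free_three_stars:
  assumes "p1 \<noteq> p2" "p1 \<noteq> p3" "p2 \<noteq> p3"
    and H: "\<forall>e\<in>H. p1 \<notin> e \<and> p2 \<notin> e \<and> p3 \<notin> e"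
    and X1: "\<forall>e\<in>X1. p1 \<in> e \<and> p2 \<notin> e \<and> p3 \<notin> e"
    and X2: "\<forall>e\<in>X2. p2 \<in> e \<and> p1 \<notin> e \<and> p3 \<notin> e"
    and X3: "\<forall>e\<in>X3. p3 \<in> e \<and> p1 \<notin> e \<and> p2 \<notin> e"
    and "finite H" "finite X1" "finite X2" "finite X3"
  shows "num_free (H \<union> X1 \<union> X2 \<union> X3) r k \<phi> =
    (\<Sum>\<psi>\<in>free_colorings H r k \<phi>. card (free_extensions r k \<phi> H X1 \<psi>) *
       card (free_extensions r k \<phi> H X2 \<psi>) * card (free_extensions r k \<phi> H X3 \<psi>))"
proof (rule num_free_split[OF \<open>finite H\<close> \<open>finite X1\<close> \<open>finite X2\<close> \<open>finite X3\<close>])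
  fix S assume S: "all_edges S \<subseteq> H \<union> X1 \<union> X2 \<union> X3"
  have "\<forall>e\<in>H \<union> X1 \<union> X2 \<union> X3. p1 \<notin> e \<or> p2 \<notin> e" using H X1 X2 X3 by blast
  then have "p1 \<notin> S \<or> p2 \<notin> S" using not_both_in_clique[OF S] \<open>p1 \<noteq> p2\<close> by blast
  moreover have "\<forall>e\<in>H \<union> X1 \<union> X2 \<union> X3. p1 \<notin> e \<or> p3 \<notin> e" using H X1 X2 X3 by blast
  then have "p1 \<notin> S \<or> p3 \<notin> S" using not_both_in_clique[OF S] \<open>p1 \<noteq> p3\<close> by blast
  moreover have "\<forall>e\<in>H \<union> X1 \<union> X2 \<union> X3. p2 \<notin> e \<or> p3 \<notin> e" using H X1 X2 X3 by blast
  then have "p2 \<notin> S \<or> p3 \<notin> S" using not_both_in_clique[OF S] \<open>p2 \<noteq> p3\<close> by blast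
  moreover have "all_edges S \<inter> X1 = {}" if "p1 \<notin> S"
    using X1 that by (intro all_edges_disjoint_star) auto
  moreover have "all_edges S \<inter> X2 = {}" if "p2 \<notin> S"
    using X2 that by (intro all_edges_disjoint_star) auto
  moreover have "all_edges S \<inter> X3 = {}" if "p3 \<notin> S"
    using X3 that by (intro all_edges_disjoint_star) auto
  ultimately show "all_edges S \<subseteq> H \<union> X1 \<or> all_edges S \<subseteq> H \<union> X2 \<or> all_edges S \<subseteq> H \<union> X3"
    using S by blast
next
  show "H \<inter> X1 = {}" using H X1 by blast
  show "H \<inter> X2 = {}" using H X2 by blast
  show "H \<inter> X3 = {}" using H X3 by blast
  show "X1 \<inter> X2 = {}" using X1 X2 by blast
  show "X1 \<inter> X3 = {}" using X1 X3 by blast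
  show "X2 \<inter> X3 = {}" using X2 X3 by blast
qed

lemma free_extensions_empty:
  "\<psi> \<in> free_colorings H r k \<phi> \<Longrightarrow> free_extensions r k \<phi> H {} \<psi> = {\<lambda>_. undefined}"
proof -
  assume \<psi>: "\<psi> \<in> free_colorings H r k \<phi>"
  then have "(\<lambda>e. if e \<in> H then \<psi> e else undefined) = \<psi>"
    by (auto simp: free_colorings_def PiE_def extensional_def)
  then show ?thesis using \<psi> by (auto simp: free_extensions_def)
qed

lemma num_free_two_stars:
  assumes "p1 \<noteq> p2"
    and H: "\<forall>e\<in>H. p1 \<notin> e \<and> p2 \<notin> e"
    and X1: "\<forall>e\<in>X1. p1 \<in> e \<and> p2 \<notin> e"
    and X2: "\<forall>e\<in>X2. p2 \<in> e \<and> p1 \<notin> e"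
    and "finite H" "finite X1" "finite X2"
  shows "num_free (H \<union> X1 \<union> X2) r k \<phi> =
    (\<Sum>\<psi>\<in>free_colorings H r k \<phi>. card (free_extensions r k \<phi> H X1 \<psi>) * card (free_extensions r k \<phi> H X2 \<psi>))"
proof -
  have "num_free (H \<union> X1 \<union> X2 \<union> {}) r k \<phi> =
    (\<Sum>\<psi>\<in>free_colorings H r k \<phi>. card (free_extensions r k \<phi> H X1 \<psi>) *
       card (free_extensions r k \<phi> H X2 \<psi>) * card (free_extensions r k \<phi> H {} \<psi>))"
  proof (rule num_free_split[OF \<open>finite H\<close> \<open>finite X1\<close> \<open>finite X2\<close> finite.emptyI])
    fix S assume S: "all_edges S \<subseteq> H \<union> X1 \<union> X2 \<union> {}"
    have "\<forall>e\<in>H \<union> X1 \<union> X2 \<union> {}. p1 \<notin> e \<or> p2 \<notin> e" using H X1 X2 by blast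
    then have "p1 \<notin> S \<or> p2 \<notin> S" using not_both_in_clique[OF S] \<open>p1 \<noteq> p2\<close> by blast
    moreover have "all_edges S \<inter> X1 = {}" if "p1 \<notin> S"
      using X1 that by (intro all_edges_disjoint_star) auto
    moreover have "all_edges S \<inter> X2 = {}" if "p2 \<notin> S"
      using X2 that by (intro all_edges_disjoint_star) auto
    ultimately show "all_edges S \<subseteq> H \<union> X1 \<or> all_edges S \<subseteq> H \<union> X2 \<or> all_edges S \<subseteq> H \<union> {}"
      using S by blast
  next
    show "H \<inter> X1 = {}" using H X1 by blast
    show "H \<inter> X2 = {}" using H X2 by blast
    show "X1 \<inter> X2 = {}" using X1 X2 by blast
  qed simp_all
  then show ?thesis by (simp add: free_extensions_empty cong: sum.cong)
qed

lemma sum_squares_eq_sum_mult: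
  fixes a b :: "'i \<Rightarrow> nat"
  assumes "(\<Sum>i\<in>A. a i * a i) \<le> (\<Sum>i\<in>A. a i * b i)" "(\<Sum>i\<in>A. b i * b i) \<le> (\<Sum>i\<in>A. a i * b i)"
  shows "(\<Sum>i\<in>A. a i * a i) = (\<Sum>i\<in>A. a i * b i)"
proof -
  let ?A = "\<Sum>i\<in>A. int (a i) * int (a i)" and ?B = "\<Sum>i\<in>A. int (b i) * int (b i)"
    and ?C = "\<Sum>i\<in>A. int (a i) * int (b i)"
  have "0 \<le> (\<Sum>i\<in>A. (int (a i) - int (b i)) * (int (a i) - int (b i)))"
    by (rule sum_nonneg) simp
  also have "\<dots> = ?A + ?B - 2 * ?C"
    by (simp add: algebra_simps sum.distrib sum_subtractf sum_distrib_left)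
  finally have "0 \<le> ?A + ?B - 2 * ?C" .
  moreover have "?A \<le> ?C" "?B \<le> ?C" using assms by (simp_all flip: of_nat_mult of_nat_sum)
  ultimately have "?A = ?C" by linarith
  then show ?thesis by (simp flip: of_nat_mult of_nat_sum)
qed

text \<open>In \<open>clone x y E\<close> the vertex y is replaced by a non-adjacent twin of x.\<close>

definition clone :: "nat \<Rightarrow> nat \<Rightarrow> nat set set \<Rightarrow> nat set set" where
  "clone x y E = {e \<in> E. y \<notin> e} \<union> (`) (transpose x y) ` {e \<in> E. x \<in> e}"

lemma graph_on_clone: "graph_on n E \<Longrightarrow> x < n \<Longrightarrow> y < n \<Longrightarrow> graph_on n (clone x y E)"
  unfolding clone_def graph_on_Un
  by (auto intro: graph_on_subset graph_on_subset[OF graph_on_transpose_image])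

lemma nonadjacent_not_both_in_edge:
  "graph_on n E \<Longrightarrow> {x, y} \<notin> E \<Longrightarrow> e \<in> E \<Longrightarrow> x \<in> e \<Longrightarrow> y \<in> e \<Longrightarrow> x = y"
  using edge_eq_doubleton by blast

lemma extremal_clone:
  assumes ex: "extremal r k \<phi> n E" and "x < n" "y < n" "x \<noteq> y" "{x, y} \<notin> E"
  shows "extremal r k \<phi> n (clone x y E)"
proof -
  have g: "graph_on n E" and M: "num_free E r k \<phi> = max_free r k \<phi> n"
    using ex by (auto simp: extremal_def)
  have not_both: "\<not> (x \<in> e \<and> y \<in> e)" if "e \<in> E" for e
    using nonadjacent_not_both_in_edge[OF g \<open>{x, y} \<notin> E\<close> that] \<open>x \<noteq> y\<close> by blast
  define H where "H = {e \<in> E. x \<notin> e \<and> y \<notin> e}"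
  define X where "X = {e \<in> E. x \<in> e}"
  define Y where "Y = {e \<in> E. y \<in> e}"
  let ?ext = "free_extensions r k \<phi> H" and ?\<sigma> = "(`) (transpose x y)"
  have fin: "finite H" "finite X" "finite Y"
    using graph_on_finite[OF g] by (simp_all add: H_def X_def Y_def)
  have H: "\<forall>e\<in>H. x \<notin> e \<and> y \<notin> e" by (simp add: H_def)
  have X: "\<forall>e\<in>X. x \<in> e \<and> y \<notin> e" and Y: "\<forall>e\<in>Y. y \<in> e \<and> x \<notin> e"
    using not_both by (auto simp: X_def Y_def)
  have \<sigma>X: "\<forall>e\<in>?\<sigma> ` X. y \<in> e \<and> x \<notin> e" and \<sigma>Y: "\<forall>e\<in>?\<sigma> ` Y. x \<in> e \<and> y \<notin> e"
    using X Y by (auto simp: in_transpose_image_iff)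
  have fix_H: "\<And>e. e \<in> H \<Longrightarrow> transpose x y ` e = e" using H by simp
  define a where "a \<psi> = card (?ext X \<psi>)" for \<psi>
  define b where "b \<psi> = card (?ext Y \<psi>)" for \<psi>
  have "E = H \<union> X \<union> Y" by (auto simp: H_def X_def Y_def)
  then have count: "num_free E r k \<phi> = (\<Sum>\<psi>\<in>free_colorings H r k \<phi>. a \<psi> * b \<psi>)"
    using num_free_two_stars[OF \<open>x \<noteq> y\<close> H X Y fin] by (simp add: a_def b_def)
  have "clone x y E = H \<union> X \<union> ?\<sigma> ` X"
    using X unfolding clone_def by (auto simp: H_def X_def)
  then have count_xy: "num_free (clone x y E) r k \<phi> = (\<Sum>\<psi>\<in>free_colorings H r k \<phi>. a \<psi> * a \<psi>)"
    using num_free_two_stars[OF \<open>x \<noteq> y\<close> H X \<sigma>X fin(1,2)] fin(2)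
    by (simp add: card_free_extensions_image[OF bij_transpose fix_H] a_def)
  have "clone y x E = H \<union> ?\<sigma> ` Y \<union> Y"
    using Y unfolding clone_def by (auto simp: H_def Y_def transpose_commute)
  then have count_yx: "num_free (clone y x E) r k \<phi> = (\<Sum>\<psi>\<in>free_colorings H r k \<phi>. b \<psi> * b \<psi>)"
    using num_free_two_stars[OF \<open>x \<noteq> y\<close> H \<sigma>Y Y fin(1) finite_imageI fin(3)] fin(3)
    by (simp add: card_free_extensions_image[OF bij_transpose fix_H] b_def)
  have "num_free (clone x y E) r k \<phi> \<le> num_free E r k \<phi>" "num_free (clone y x E) r k \<phi> \<le> num_free E r k \<phi>"
    unfolding M using g \<open>x < n\<close> \<open>y < n\<close> by (simp_all add: num_free_le_max_free graph_on_clone)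
  then have "num_free (clone x y E) r k \<phi> = num_free E r k \<phi>"
    unfolding count count_xy count_yx by (rule sum_squares_eq_sum_mult)
  then show ?thesis using M g \<open>x < n\<close> \<open>y < n\<close> by (simp add: extremal_def graph_on_clone)
qed

lemma sum_cube_bounds_imp_zero_or_eq:
  fixes a c :: "'i \<Rightarrow> nat"
  assumes "finite A" "(\<Sum>i\<in>A. a i * a i * a i) \<le> M" "(\<Sum>i\<in>A. a i * c i * c i) \<le> M"
    and "(\<Sum>i\<in>A. a i * a i * c i) = M"
  shows "\<forall>i\<in>A. a i = 0 \<or> a i = c i"
proof -
  let ?d = "\<lambda>i. int (a i) * ((int (a i) - int (c i)) * (int (a i) - int (c i)))"
  have "(\<Sum>i\<in>A. ?d i) = (\<Sum>i\<in>A. int (a i) * int (a i) * int (a i))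
      + (\<Sum>i\<in>A. int (a i) * int (c i) * int (c i)) - 2 * (\<Sum>i\<in>A. int (a i) * int (a i) * int (c i))"
    by (simp add: algebra_simps sum.distrib sum_subtractf sum_distrib_left)
  also have "\<dots> \<le> 0" using assms(2-4) by (simp flip: of_nat_mult of_nat_sum)
  finally have "(\<Sum>i\<in>A. ?d i) \<le> 0" .
  moreover have "\<forall>i\<in>A. 0 \<le> ?d i" by simp
  ultimately have "\<forall>i\<in>A. ?d i = 0"
    using sum_nonneg_eq_0_iff[OF \<open>finite A\<close>] sum_nonneg[of A ?d] by (metis (no_types, lifting) antisym)
  then show ?thesis by auto
qed

lemma extremal_three_stars:
  assumes "p1 \<noteq> p2" "p1 \<noteq> p3" "p2 \<noteq> p3" "p2 < n" "p3 < n"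
    and H: "\<forall>e\<in>H. p1 \<notin> e \<and> p2 \<notin> e \<and> p3 \<notin> e"
    and U: "\<forall>e\<in>U. p1 \<in> e \<and> p2 \<notin> e \<and> p3 \<notin> e"
    and V: "\<forall>e\<in>V. p2 \<in> e \<and> p1 \<notin> e \<and> p3 \<notin> e"
    and W: "\<forall>e\<in>W. p3 \<in> e \<and> p1 \<notin> e \<and> p2 \<notin> e"
    and twin2: "extremal r k \<phi> n (H \<union> U \<union> (`) (transpose p1 p2) ` U \<union> W)"
    and twin3: "extremal r k \<phi> n (H \<union> U \<union> V \<union> (`) (transpose p1 p3) ` U)"
  shows "extremal r k \<phi> n (H \<union> U \<union> V \<union> W)"
proof -
  let ?\<sigma> = "(`) (transpose p1 p2)" and ?\<tau> = "(`) (transpose p1 p3)" and ?\<rho> = "(`) (transpose p2 p3)"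
  let ?ext = "free_extensions r k \<phi> H" and ?A = "free_colorings H r k \<phi>" and ?M = "max_free r k \<phi> n"
  have g2: "graph_on n (H \<union> U \<union> ?\<sigma> ` U \<union> W)" and g3: "graph_on n (H \<union> U \<union> V \<union> ?\<tau> ` U)"
    using twin2 twin3 by (simp_all add: extremal_def)
  have "finite (H \<union> U \<union> ?\<sigma> ` U \<union> W)" "finite (H \<union> U \<union> V \<union> ?\<tau> ` U)"
    using graph_on_finite[OF g2] graph_on_finite[OF g3] .
  then have fin: "finite H" "finite U" "finite V" "finite W" by simp_all
  have \<sigma>U: "\<forall>e\<in>?\<sigma> ` U. p2 \<in> e \<and> p1 \<notin> e \<and> p3 \<notin> e"
    using U \<open>p1 \<noteq> p3\<close> \<open>p2 \<noteq> p3\<close> by (auto simp: in_transpose_image_iff)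
  have \<tau>U: "\<forall>e\<in>?\<tau> ` U. p3 \<in> e \<and> p1 \<notin> e \<and> p2 \<notin> e"
    using U \<open>p1 \<noteq> p2\<close> \<open>p2 \<noteq> p3\<close> by (auto simp: in_transpose_image_iff)
  have \<rho>W: "\<forall>e\<in>?\<rho> ` W. p2 \<in> e \<and> p1 \<notin> e \<and> p3 \<notin> e"
    using W \<open>p1 \<noteq> p2\<close> \<open>p1 \<noteq> p3\<close> by (auto simp: in_transpose_image_iff)
  have fix_H: "transpose p1 p2 ` e = e" "transpose p1 p3 ` e = e" "transpose p2 p3 ` e = e"
    if "e \<in> H" for e
    using H that by simp_all
  define a where "a \<psi> = card (?ext U \<psi>)" for \<psi>
  define b where "b \<psi> = card (?ext V \<psi>)" for \<psi>
  define c where "c \<psi> = card (?ext W \<psi>)" for \<psi>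
  have card_image: "card (?ext (?\<sigma> ` U) \<psi>) = a \<psi>" "card (?ext (?\<tau> ` U) \<psi>) = a \<psi>"
    "card (?ext (?\<rho> ` W) \<psi>) = c \<psi>" for \<psi>
    unfolding a_def c_def using fin fix_H by (simp_all add: card_free_extensions_image)
  note count = num_free_three_stars[OF assms(1-3) H]
  have "(\<Sum>\<psi>\<in>?A. a \<psi> * a \<psi> * a \<psi>) \<le> ?M"
  proof -
    have "graph_on n (H \<union> U \<union> ?\<sigma> ` U \<union> ?\<tau> ` U)" using g2 g3 by (simp add: graph_on_Un)
    then have "num_free (H \<union> U \<union> ?\<sigma> ` U \<union> ?\<tau> ` U) r k \<phi> \<le> ?M" by (rule num_free_le_max_free)
    then show ?thesis using count[OF U \<sigma>U \<tau>U] fin card_image by (simp add: a_def)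
  qed
  moreover have "(\<Sum>\<psi>\<in>?A. a \<psi> * c \<psi> * c \<psi>) \<le> ?M"
  proof -
    have "graph_on n (?\<rho> ` W)" using g2 \<open>p2 < n\<close> \<open>p3 < n\<close>
      by (simp add: graph_on_Un graph_on_transpose_image)
    then have "graph_on n (H \<union> U \<union> ?\<rho> ` W \<union> W)" using g2 by (simp add: graph_on_Un)
    then have "num_free (H \<union> U \<union> ?\<rho> ` W \<union> W) r k \<phi> \<le> ?M" by (rule num_free_le_max_free)
    then show ?thesis using count[OF U \<rho>W W] fin card_image by (simp add: a_def c_def)
  qed
  moreover have "(\<Sum>\<psi>\<in>?A. a \<psi> * a \<psi> * c \<psi>) = ?M"
    using twin2 count[OF U \<sigma>U W] fin card_image by (simp add: extremal_def a_def c_def)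
  ultimately have "\<forall>\<psi>\<in>?A. a \<psi> = 0 \<or> a \<psi> = c \<psi>"
    using fin by (intro sum_cube_bounds_imp_zero_or_eq free_colorings_finite)
  then have "(\<Sum>\<psi>\<in>?A. a \<psi> * b \<psi> * c \<psi>) = (\<Sum>\<psi>\<in>?A. a \<psi> * b \<psi> * a \<psi>)"
    by (intro sum.cong) auto
  also have "\<dots> = ?M"
    using twin3 count[OF U V \<tau>U] fin card_image by (simp add: extremal_def a_def b_def)
  finally show ?thesis
    using count[OF U V W] fin g2 g3 by (simp add: extremal_def graph_on_Un a_def b_def c_def)
qed

lemma extremal_delete_edge:
  assumes ex: "extremal r k \<phi> n E" and "u < n" "v < n" "w < n"
    and uv: "{u, v} \<notin> E" and uw: "{u, w} \<notin> E" and vw: "{v, w} \<in> E"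
  shows "extremal r k \<phi> n (E - {{v, w}})"
proof -
  have g: "graph_on n E" using ex by (simp add: extremal_def)
  have "v \<noteq> w" using g vw by (auto simp: graph_on_def all_edges_def)
  have "u \<noteq> v" "u \<noteq> w" using uv uw vw by (auto simp: insert_commute)
  have no_uv: "v \<notin> e" and no_uw: "w \<notin> e" if "e \<in> E" "u \<in> e" for e
    using nonadjacent_not_both_in_edge[OF g _ that] uv uw \<open>u \<noteq> v\<close> \<open>u \<noteq> w\<close> by blast+
  have only_vw: "e = {v, w}" if "e \<in> E" "v \<in> e" "w \<in> e" for e
    using edge_eq_doubleton[OF g that \<open>v \<noteq> w\<close>] .
  define H where "H = {e \<in> E. u \<notin> e \<and> v \<notin> e \<and> w \<notin> e}"
  define U where "U = {e \<in> E. u \<in> e}"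
  define V where "V = {e \<in> E. v \<in> e \<and> w \<notin> e}"
  define W where "W = {e \<in> E. w \<in> e \<and> v \<notin> e}"
  have H: "\<forall>e\<in>H. u \<notin> e \<and> v \<notin> e \<and> w \<notin> e" by (simp add: H_def)
  have U: "\<forall>e\<in>U. u \<in> e \<and> v \<notin> e \<and> w \<notin> e" using no_uv no_uw by (simp add: U_def)
  have V: "\<forall>e\<in>V. v \<in> e \<and> u \<notin> e \<and> w \<notin> e" using no_uv by (auto simp: V_def)
  have W: "\<forall>e\<in>W. w \<in> e \<and> u \<notin> e \<and> v \<notin> e" using no_uw by (auto simp: W_def)
  have "{e \<in> E. v \<notin> e} = H \<union> U \<union> W" using no_uv by (auto simp: H_def U_def W_def)
  then have "clone u v E = H \<union> U \<union> (`) (transpose u v) ` U \<union> W"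
    by (auto simp: clone_def U_def[symmetric])
  moreover have "{e \<in> E. w \<notin> e} = H \<union> U \<union> V" using no_uw by (auto simp: H_def U_def V_def)
  then have "clone u w E = H \<union> U \<union> V \<union> (`) (transpose u w) ` U"
    by (auto simp: clone_def U_def[symmetric])
  moreover have "E - {{v, w}} = H \<union> U \<union> V \<union> W"
    using only_vw \<open>u \<noteq> v\<close> \<open>u \<noteq> w\<close> by (auto simp: H_def U_def V_def W_def)
  ultimately show ?thesis
    using extremal_three_stars[OF \<open>u \<noteq> v\<close> \<open>u \<noteq> w\<close> \<open>v \<noteq> w\<close> \<open>v < n\<close> \<open>w < n\<close> H U V W]
      extremal_clone[OF ex \<open>u < n\<close> \<open>v < n\<close> \<open>u \<noteq> v\<close> uv] extremal_clone[OF ex \<open>u < n\<close> \<open>w < n\<close> \<open>u \<noteq> w\<close> uw]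
    by simp
qed

theorem lemma2p10:
  fixes r k n :: nat and \<phi> :: "nat set \<Rightarrow> nat" and E :: "nat set set" and u v w :: nat
  assumes "r \<ge> 2" and "k \<ge> 3"
    and "pattern_coloring r k \<phi>"
    and "extremal r k \<phi> n E"
    and "\<not> complete_multipartite n E"
    and "u < n" and "v < n" and "w < n"
    and "{u, v} \<notin> E" and "{u, w} \<notin> E" and "{v, w} \<in> E"
  shows "extremal r k \<phi> n (E - {{v, w}})"
  using extremal_delete_edge[OF assms(4,6-11)] .

end
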